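(* Consider the faulty-starter delivery problem described in the context, with finisher starting position $(x,y)\neq(0,0)$, $y\ge 0$, and assume $(x,y)\in\overline{D}(1,1)$, i.e. $\sqrt{(x-1)^2+y^2}\le1$. Then the competitive ratio of $\mathcal{A}_d$ is $$\mathrm{CR}_{\mathcal{A}_d}=\begin{cases}\dfrac{x^2+y^2+x}{x\left(1+\sqrt{x^2+y^2}\right)} & \text{if }(x,y)\in\overline{D}(1/2,1/2),\\[2mm] 1+\dfrac{y^2}{x(\sqrt{x}+1)^2} & \text{otherwise.}\end{cases}$$
   Context: Setting. In the plane let $S=(0,0)$ and $T=(1,0)$. A "starter" drone carrying a package starts at $S$ at time $0$ and moves at unit speed along $\overline{ST}$ towards $T$. At an unknown time $t\in[0,1]$ it fails and stays forever at $(t,0)$ with the package (at time $s$ the package is at $(\min\{s,t\},0)$). A "finisher" drone starts at time $0$ at $P=(x,y)$ with $y\ge0$, moves at unit speed and can stop and turn instantaneously. The package can be handed over only when the drones are co-located; it is delivered at the first time the finisher, carrying the package, is at $T$. An online algorithm $\mathcal{A}$ specifies the finisher's trajectory using only $(x,y)$; $A(t)$ is its delivery time for fail time $t$. $\mathrm{Opt}(t)=\max\{1,\sqrt{(x-t)^2+y^2}+1-t\}$ is the optimal offline delivery time. $\mathrm{CR}_{\mathcal{A}}(t)=A(t)/\mathrm{Opt}(t)$ and $\mathrm{CR}_{\mathcal{A}}=\sup_{0\le t\le1}\mathrm{CR}_{\mathcal{A}}(t)$. $\overline{D}(c,r)$ denotes the closed disk of radius $r$ centered at $(c,0)$. Algorithm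 $\mathcal{A}_d$ (for $x>0$): let $d=(x^2+y^2)/(2x)$ (the point $(d,0)$ satisfies $\sqrt{(x-d)^2+y^2}=d$); the finisher goes straight to $(d,0)$, then moves along the segment towards $S$ until it finds the package, then goes to $T$. *)

theory Defs
  imports Complex_Main
begin

text \<open>Faulty-starter delivery problem. S = (0,0), T = (1,0). The starter fails at time t;
  at time s the package is at (min s t, 0).\<close>

definition starter_pos :: "real \<Rightarrow> real \<Rightarrow> real \<times> real" where
  "starter_pos t s = (min s t, 0)"

text \<open>The point (d,0) with distance d from P = (x,y).\<close>
definition Ad_d :: "real \<Rightarrow> real \<Rightarrow> real" where
  "Ad_d x y = (x\<^sup>2 + y\<^sup>2) / (2 * x)"

text \<open>Position at time s of the finisher following algorithm A_d, as long as it has not yet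
  picked up the package: it moves at unit speed along the straight segment from P to (d,0)
  (length d, reached at time d), then at unit speed along the x-axis towards S (stopping at S).\<close>
definition Ad_pos :: "real \<Rightarrow> real \<Rightarrow> real \<Rightarrow> real \<times> real" where
  "Ad_pos x y s = (let d = Ad_d x y in
     if s \<le> d then (x + (s / d) * (d - x), y - (s / d) * y)
     else (max (2 * d - s) 0, 0))"

definition Ad_pickup :: "real \<Rightarrow> real \<Rightarrow> real \<Rightarrow> real" where
  "Ad_pickup x y t = Inf {s. 0 \<le> s \<and> Ad_pos x y s = starter_pos t s}"

definition Ad_time :: "real \<Rightarrow> real \<Rightarrow> real \<Rightarrow> real" where
  "Ad_time x y t = (let p = Ad_pickup x y t; q = Ad_pos x y p in
     p + sqrt ((fst q - 1)\<^sup>2 + (snd q)\<^sup>2))"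

definition Opt :: "real \<Rightarrow> real \<Rightarrow> real \<Rightarrow> real" where
  "Opt x y t = max 1 (sqrt ((x - t)\<^sup>2 + y\<^sup>2) + 1 - t)"

definition CR_Ad :: "real \<Rightarrow> real \<Rightarrow> real" where
  "CR_Ad x y = (SUP t\<in>{0..1}. Ad_time x y t / Opt x y t)"

end

theory Submission
  imports Defs "HOL-Analysis.Euclidean_Space"
begin

text \<open>For \<open>t \<ge> d\<close> the finisher meets the package at \<open>(d, 0)\<close> at time \<open>d\<close> and delivers at
  time \<open>1 = Opt(t)\<close>; for \<open>t < d\<close> it picks it up at time \<open>2d - t\<close>, so \<open>A(t) = 2d + 1 - 2t\<close>
  while \<open>Opt(t) = |P - (t,0)| + 1 - t\<close>. For a unit vector \<open>u\<close>, Cauchy-Schwarz gives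
  \<open>|P - (t,0)| \<ge> \<langle>P - (t,0), u\<rangle>\<close>, which is affine in \<open>t\<close>, and a suitable \<open>u\<close> turns this into
  \<open>A(t) \<le> V Opt(t)\<close>. Inside \<open>D(1/2,1/2)\<close> take \<open>u = P/|P|\<close>; equality holds at \<open>t = 0\<close>.
  Outside take \<open>u\<close> proportional to \<open>(1 - w\<^sup>2, 2w)\<close> with \<open>w = y/(\<surd>x (1 + \<surd>x))\<close>, for which the
  affine bound is exactly \<open>A(t)/V\<close>; equality holds where \<open>P - (t,0)\<close> is parallel to \<open>u\<close>.\<close>

lemma Ad_d_pos: "x > 0 \<Longrightarrow> Ad_d x y > 0"
  by (simp add: Ad_d_def add_pos_nonneg)

lemma Ad_d_mult: "x \<noteq> 0 \<Longrightarrow> 2 * x * Ad_d x y = x\<^sup>2 + y\<^sup>2"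
  by (simp add: Ad_d_def)

lemma Ad_d_le_1: "x > 0 \<Longrightarrow> x\<^sup>2 + y\<^sup>2 \<le> 2 * x \<Longrightarrow> Ad_d x y \<le> 1"
  by (simp add: Ad_d_def)

lemma Ad_d_dist: "x \<noteq> 0 \<Longrightarrow> (x - Ad_d x y)\<^sup>2 + y\<^sup>2 = (Ad_d x y)\<^sup>2"
  using Ad_d_mult[of x y] by (simp add: power2_eq_square algebra_simps)

lemma Ad_pos_before_d:
  "s \<le> Ad_d x y \<Longrightarrow>
    Ad_pos x y s = (x + s / Ad_d x y * (Ad_d x y - x), y - s / Ad_d x y * y)"
  by (simp add: Ad_pos_def Let_def)

lemma Ad_pos_after_d: "Ad_d x y < s \<Longrightarrow> Ad_pos x y s = (max (2 * Ad_d x y - s) 0, 0)"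
  by (simp add: Ad_pos_def Let_def)

lemma Ad_pos_Ad_d: "x > 0 \<Longrightarrow> Ad_pos x y (Ad_d x y) = (Ad_d x y, 0)"
  using Ad_d_pos[of x y] by (simp add: Ad_pos_before_d)

lemma Ad_meet_before_d:
  assumes x: "x > 0" and s: "0 \<le> s" "s \<le> Ad_d x y"
    and meet: "Ad_pos x y s = starter_pos t s"
  shows "s = Ad_d x y \<and> Ad_d x y \<le> t"
proof -
  define d where "d = Ad_d x y"
  have d: "d > 0" "2 * x * d = x\<^sup>2 + y\<^sup>2"
    using Ad_d_pos[OF x] Ad_d_mult[of x y] x by (auto simp: d_def)
  from meet have fst_eq: "x + s / d * (d - x) = min s t" and snd_eq: "y * (d - s) = 0"
    using Ad_pos_before_d[OF s(2)] d(1) by (auto simp: d_def starter_pos_def field_simps)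
  show ?thesis
  proof (cases "y = 0")
    case True
    then have "d = x / 2" using d(2) x by (simp add: power2_eq_square)
    then have "s / d * (d - x) = - s" using x by (simp add: field_simps)
    then have "x - s = min s t" using fst_eq by simp
    then show ?thesis using s \<open>d = x / 2\<close> by (auto simp: d_def min_def split: if_splits)
  next
    case False
    then have "s = d" using snd_eq by simp
    then show ?thesis using fst_eq d(1) by (auto simp: d_def min_def split: if_splits)
  qed
qed

lemma Ad_pickup_eq:
  assumes x: "x > 0" and t: "t \<ge> 0"
  shows "Ad_pickup x y t = (if Ad_d x y \<le> t then Ad_d x y else 2 * Ad_d x y - t)"
    (is "_ = ?m")
proof -
  define d where "d = Ad_d x y"
  let ?meet = "{s. 0 \<le> s \<and> Ad_pos x y s = starter_pos t s}"
  have d: "d > 0" using Ad_d_pos[OF x] by (simp add: d_def)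
  have "?m \<in> ?meet"
    using d t Ad_pos_Ad_d[OF x] Ad_pos_after_d[of x y "2 * d - t"]
    by (auto simp: d_def starter_pos_def)
  moreover have "?m \<le> s" if "s \<in> ?meet" for s
  proof (cases "s \<le> d")
    case True
    then show ?thesis using Ad_meet_before_d[OF x, of s y t] that by (simp add: d_def)
  next
    case False
    then show ?thesis using Ad_pos_after_d[of x y s] that d
      by (auto simp: d_def starter_pos_def max_def min_def split: if_splits)
  qed
  ultimately show ?thesis unfolding Ad_pickup_def by (intro cInf_eq_minimum) auto
qed

lemma Ad_time_eq:
  assumes x: "x > 0" and t: "0 \<le> t" "t \<le> 1" and d1: "Ad_d x y \<le> 1"
  shows "Ad_time x y t = (if Ad_d x y \<le> t then 1 else 2 * Ad_d x y + 1 - 2 * t)"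
proof (cases "Ad_d x y \<le> t")
  case True
  then show ?thesis using Ad_pickup_eq[OF x t(1)] Ad_pos_Ad_d[OF x] d1
    by (simp add: Ad_time_def)
next
  case False
  then show ?thesis using Ad_pickup_eq[OF x t(1)] Ad_pos_after_d[of x y "2 * Ad_d x y - t"] t
    by (simp add: Ad_time_def)
qed

lemma Opt_ge_1: "Opt x y t \<ge> 1"
  by (simp add: Opt_def)

lemma Opt_before_Ad_d:
  assumes x: "x > 0" and t: "t \<le> Ad_d x y"
  shows "Opt x y t = sqrt ((x - t)\<^sup>2 + y\<^sup>2) + 1 - t" and "t \<le> sqrt ((x - t)\<^sup>2 + y\<^sup>2)"
proof -
  have "(x - t)\<^sup>2 + y\<^sup>2 - t\<^sup>2 = 2 * x * (Ad_d x y - t)"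
    using Ad_d_mult[of x y] x by (simp add: power2_eq_square algebra_simps)
  also have "\<dots> \<ge> 0" using x t by simp
  finally have "t\<^sup>2 \<le> (x - t)\<^sup>2 + y\<^sup>2" by simp
  then show "t \<le> sqrt ((x - t)\<^sup>2 + y\<^sup>2)" by (rule real_le_rsqrt)
  then show "Opt x y t = sqrt ((x - t)\<^sup>2 + y\<^sup>2) + 1 - t" by (simp add: Opt_def)
qed

lemma CR_Ad_eqI:
  assumes x: "x > 0" and d1: "Ad_d x y \<le> 1"
    and bound: "\<And>t. 0 \<le> t \<Longrightarrow> t \<le> Ad_d x y \<Longrightarrow>
      2 * Ad_d x y + 1 - 2 * t \<le> V * (sqrt ((x - t)\<^sup>2 + y\<^sup>2) + 1 - t)"
    and t0: "0 \<le> t0" "t0 < Ad_d x y"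
    and attained: "2 * Ad_d x y + 1 - 2 * t0 = V * (sqrt ((x - t0)\<^sup>2 + y\<^sup>2) + 1 - t0)"
  shows "CR_Ad x y = V"
proof -
  define d where "d = Ad_d x y"
  define R where "R t = Ad_time x y t / Opt x y t" for t
  have d: "d > 0" using Ad_d_pos[OF x] by (simp add: d_def)
  have "sqrt ((x - d)\<^sup>2 + y\<^sup>2) = d" using Ad_d_dist[of x y] x d by (simp add: d_def)
  then have V1: "1 \<le> V" using bound[of d] d by (simp add: d_def)
  have R_before: "R t = (2 * d + 1 - 2 * t) / Opt x y t" and Opt_pos: "Opt x y t > 0"
    if "0 \<le> t" "t < d" for t
    using Ad_time_eq[OF x, of t y] Opt_ge_1[of x y t] that d1 by (simp_all add: R_def d_def)
  have "R t \<le> V" if t: "t \<in> {0..1}" for t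
  proof (cases "t < d")
    case True
    then have "2 * d + 1 - 2 * t \<le> V * Opt x y t"
      using bound[of t] Opt_before_Ad_d[OF x, of t y] t by (simp add: d_def)
    then show ?thesis using R_before[of t] Opt_pos[of t] True t by (simp add: pos_divide_le_eq)
  next
    case False
    then have "R t \<le> 1"
      using Ad_time_eq[OF x, of t y] Opt_ge_1[of x y t] t d1 by (simp add: R_def d_def)
    then show ?thesis using V1 by linarith
  qed
  moreover have "R t0 = V"
    using R_before[of t0] Opt_pos[of t0] attained Opt_before_Ad_d[OF x, of t0 y] t0
    by (simp add: d_def)
  moreover have "t0 \<in> {0..1}" using t0 d1 by simp
  ultimately have "Sup (R ` {0..1}) = V" by (intro cSup_eq_maximum) auto
  then show ?thesis by (simp add: CR_Ad_def R_def)
qed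

lemma delivery_le_certificate:
  fixes p q N d x y t :: real
  assumes norm: "p\<^sup>2 + q\<^sup>2 = N\<^sup>2" "N \<ge> 0"
    and const: "2 * d + 1 \<le> p * x + q * y + N" and slope: "p + N \<le> 2" and t: "t \<ge> 0"
  shows "2 * d + 1 - 2 * t \<le> N * (sqrt ((x - t)\<^sup>2 + y\<^sup>2) + 1 - t)"
proof -
  have "p * (x - t) + q * y \<le> N * sqrt ((x - t)\<^sup>2 + y\<^sup>2)"
    using norm_cauchy_schwarz[of "(p, q)" "(x - t, y)"] norm by (simp add: norm_Pair)
  moreover have "t * (p + N) \<le> t * 2" using mult_left_mono[OF slope t] .
  ultimately show ?thesis using const by (simp add: algebra_simps)
qed

lemma CR_Ad_inner_disk:
  assumes x: "x > 0" and disk: "x\<^sup>2 + y\<^sup>2 \<le> x"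
  shows "CR_Ad x y = (x\<^sup>2 + y\<^sup>2 + x) / (x * (1 + sqrt (x\<^sup>2 + y\<^sup>2)))"
proof -
  define r where "r = sqrt (x\<^sup>2 + y\<^sup>2)"
  define V where "V = (x\<^sup>2 + y\<^sup>2 + x) / (x * (1 + r))"
  define d where "d = Ad_d x y"
  have r: "r > 0" "r\<^sup>2 = x\<^sup>2 + y\<^sup>2" "x \<le> r"
    using x by (auto simp: r_def add_pos_nonneg intro: real_le_rsqrt)
  have d: "2 * x * d = r\<^sup>2" using Ad_d_mult[of x y] x r(2) by (simp add: d_def)
  have "V * (1 + r) = (x\<^sup>2 + y\<^sup>2 + x) / x" using x r(1) by (simp add: V_def)
  also have "\<dots> = 2 * d + 1" using x d r(2) by (simp add: field_simps)
  finally have V_r: "V * (1 + r) = 2 * d + 1" .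
  have V0: "V \<ge> 0" using x r by (simp add: V_def)
  have "(r\<^sup>2 + x) * (x + r) = 2 * r * (x * (1 + r)) + (r - x) * (r\<^sup>2 - x)"
    by (simp add: algebra_simps power2_eq_square)
  also have "\<dots> \<le> 2 * r * (x * (1 + r))"
    using r disk by (simp add: mult_nonneg_nonpos)
  finally have "V * (x + r) \<le> 2 * r"
    using x r by (simp add: V_def pos_divide_le_eq)
  then have slope: "V * x / r + V \<le> 2" using r by (simp add: field_simps)
  show ?thesis
    unfolding V_def[unfolded r_def, symmetric]
  proof (rule CR_Ad_eqI[OF x, of y V 0, folded d_def])
    show "d \<le> 1" using Ad_d_le_1[of x y] x disk by (simp add: d_def)
    show "2 * d + 1 - 2 * t \<le> V * (sqrt ((x - t)\<^sup>2 + y\<^sup>2) + 1 - t)" if "0 \<le> t" for t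
    proof (rule delivery_le_certificate[where p = "V * x / r" and q = "V * y / r"])
      have "(V * x / r)\<^sup>2 + (V * y / r)\<^sup>2 = V\<^sup>2 * (x\<^sup>2 + y\<^sup>2) / r\<^sup>2"
        by (simp add: power_divide power_mult_distrib add_divide_distrib distrib_left)
      then show "(V * x / r)\<^sup>2 + (V * y / r)\<^sup>2 = V\<^sup>2" using r(1,2) x by simp
      have "V * x / r * x + V * y / r * y = V * r\<^sup>2 / r"
        using r(2) by (simp add: power2_eq_square add_divide_distrib algebra_simps)
      then show "2 * d + 1 \<le> V * x / r * x + V * y / r * y + V"
        using r(1) V_r by (simp add: power2_eq_square algebra_simps)
    qed (use V0 slope that in auto)
    show "2 * d + 1 - 2 * 0 = V * (sqrt ((x - 0)\<^sup>2 + y\<^sup>2) + 1 - 0)"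
      using V_r by (simp add: r_def add.commute)
    show "0 < d" using Ad_d_pos[OF x] by (simp add: d_def)
  qed simp
qed

lemma CR_Ad_outside_inner_disk:
  assumes x: "x > 0" and outside: "x < x\<^sup>2 + y\<^sup>2" and disk: "x\<^sup>2 + y\<^sup>2 \<le> 2 * x"
  shows "CR_Ad x y = 1 + y\<^sup>2 / (x * (sqrt x + 1)\<^sup>2)"
proof -
  define s where "s = sqrt x"
  define w where "w = y / (s * (1 + s))"
  define c where "c = s * (1 + s) / 2"
  define t0 where "t0 = x - c * (1 - w\<^sup>2)" \<comment> \<open>so that \<open>(x - t0, y) = c (1 - w\<^sup>2, 2w)\<close>\<close>
  define d where "d = Ad_d x y"
  have s: "s > 0" "x = s\<^sup>2" using x by (simp_all add: s_def)
  have y: "y = 2 * c * w" using s by (simp add: w_def c_def)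
  have V: "1 + y\<^sup>2 / (x * (sqrt x + 1)\<^sup>2) = 1 + w\<^sup>2"
    using s by (simp add: w_def s_def[symmetric] power_divide power_mult_distrib add.commute)
  have foot: "x = t0 + c * (1 - w\<^sup>2)" by (simp add: t0_def)
  have d: "2 * d = s\<^sup>2 + (1 + s)\<^sup>2 * w\<^sup>2"
    using s by (simp add: d_def Ad_d_def y c_def field_simps power2_eq_square)
  have const: "(1 - w\<^sup>2) * x + 2 * w * y + (1 + w\<^sup>2) = 2 * d + 1"
    using d by (simp add: s(2) y c_def field_simps power2_eq_square)
  have "2 * s * (1 + s) * t0 = x\<^sup>2 + y\<^sup>2 - x"
    by (simp add: t0_def s(2) y c_def field_simps power2_eq_square)
  then have "0 < 2 * s * (1 + s) * t0" using outside by linarith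
  then have "0 < t0" by (rule zero_less_mult_pos) (use s in simp)
  moreover have "t0 < d"
    using s d by (simp add: t0_def s(2) c_def field_simps power2_eq_square add_pos_nonneg)
  ultimately have t0: "0 < t0" "t0 < d" .
  show ?thesis
    unfolding V
  proof (rule CR_Ad_eqI[OF x, of y "1 + w\<^sup>2" t0, folded d_def])
    show "2 * d + 1 - 2 * t \<le> (1 + w\<^sup>2) * (sqrt ((x - t)\<^sup>2 + y\<^sup>2) + 1 - t)"
      if "0 \<le> t" for t
    proof (rule delivery_le_certificate[where p = "1 - w\<^sup>2" and q = "2 * w"])
      show "(1 - w\<^sup>2)\<^sup>2 + (2 * w)\<^sup>2 = (1 + w\<^sup>2)\<^sup>2"
        by (simp add: power2_eq_square algebra_simps)
    qed (use const that in auto)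
    have "(x - t0)\<^sup>2 + y\<^sup>2 = (c * (1 + w\<^sup>2))\<^sup>2"
      by (simp add: foot y power2_eq_square algebra_simps)
    then have "sqrt ((x - t0)\<^sup>2 + y\<^sup>2) = c * (1 + w\<^sup>2)"
      using s by (simp add: c_def)
    moreover have "(1 + w\<^sup>2) * (c * (1 + w\<^sup>2) + 1 - t0)
        = (1 - w\<^sup>2) * x + 2 * w * y + (1 + w\<^sup>2) - 2 * t0"
      by (simp add: foot y algebra_simps power2_eq_square)
    ultimately show "2 * d + 1 - 2 * t0 = (1 + w\<^sup>2) * (sqrt ((x - t0)\<^sup>2 + y\<^sup>2) + 1 - t0)"
      using const by simp
  qed (use Ad_d_le_1[OF x disk] t0 in \<open>auto simp: d_def\<close>)
qed

theorem theorem3: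
  fixes x y :: real
  assumes "(x, y) \<noteq> (0, 0)" and "y \<ge> 0"
    and "sqrt ((x - 1)\<^sup>2 + y\<^sup>2) \<le> 1"
  shows "CR_Ad x y =
    (if sqrt ((x - 1/2)\<^sup>2 + y\<^sup>2) \<le> 1/2
     then (x\<^sup>2 + y\<^sup>2 + x) / (x * (1 + sqrt (x\<^sup>2 + y\<^sup>2)))
     else 1 + y\<^sup>2 / (x * (sqrt x + 1)\<^sup>2))"
proof -
  have disk: "x\<^sup>2 + y\<^sup>2 \<le> 2 * x"
    using assms(3) by (simp add: power2_eq_square algebra_simps)
  have x: "x > 0"
  proof (rule ccontr)
    assume "\<not> x > 0"
    then have "x = 0 \<and> y = 0" using disk by (smt (verit) sum_power2_eq_zero_iff zero_le_power2)
    then show False using assms(1) by simp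
  qed
  have inner_disk: "sqrt ((x - 1/2)\<^sup>2 + y\<^sup>2) \<le> 1/2 \<longleftrightarrow> x\<^sup>2 + y\<^sup>2 \<le> x"
  proof -
    have "sqrt ((x - 1/2)\<^sup>2 + y\<^sup>2) \<le> sqrt (1/4) \<longleftrightarrow> x\<^sup>2 + y\<^sup>2 \<le> x"
      by (simp add: power2_eq_square algebra_simps) linarith
    then show ?thesis by (simp add: real_sqrt_divide)
  qed
  show ?thesis
    using CR_Ad_inner_disk[OF x] CR_Ad_outside_inner_disk[OF x _ disk] inner_disk by auto
qed

end
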